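(* Let $A \subset \mathbb{Z}^d$ be a finite set such that $A - A$ generates $\mathbb{Z}^d$ additively and its convex hull $\Delta_A$ is a $d$-dimensional simplex. Then there exists a polynomial $p \in \mathbb{Q}[x]$ such that $|hA| = p(h)$ for all integers $h \geq 0$ with $h \geq \mathrm{vol}(\Delta_A)\cdot (d+1)! - 1 - 3d$.
   Context: For integer $h \geq 0$, $hA = \{a_1 + \cdots + a_h : a_i \in A\}$, with $0A = \{0\}$. $\mathrm{vol}(\Delta_A)$ denotes the $d$-dimensional volume of the convex hull of $A$. *)

theory Defs
  imports "HOL-Analysis.Analysis" "HOL-Computational_Algebra.Polynomial"
begin

definition int_points :: "(real ^ 'n) set" where
  "int_points = {x. \<forall>i. x $ i \<in> \<int>}"

definition add_subgroup_gen :: "'a::ab_group_add set \<Rightarrow> 'a set" where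
  "add_subgroup_gen S = \<Inter>{G. S \<subseteq> G \<and> 0 \<in> G \<and> (\<forall>x\<in>G. \<forall>y\<in>G. x - y \<in> G)}"

definition diffset :: "'a::ab_group_add set \<Rightarrow> 'a set" where
  "diffset A = {a - b | a b. a \<in> A \<and> b \<in> A}"

fun sumset :: "nat \<Rightarrow> 'a::monoid_add set \<Rightarrow> 'a set" where
  "sumset 0 A = {0}"
| "sumset (Suc h) A = {x + y | x y. x \<in> sumset h A \<and> y \<in> A}"

end

(*
  Let C \<subseteq> A be the d + 1 vertices of the simplex. Every a \<in> A has barycentric coordinates
  with respect to C, and by affine independence an h-fold sum a\<^sub>1 + ... + a\<^sub>h is determined
  by the sum \<mu> of the coordinate vectors of its summands, a vector of total mass h. Write
  \<mu> = g + Y with g = frac \<mu> and Y a multiset of vertices. The possible g form a set G of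
  lattice points of the half-open fundamental parallelepiped of the cone over the simplex,
  so |G| \<le> d! vol, by counting lattice points in large dilates of the simplex.

  For fixed g the admissible Y form an up-closed set of multisets. A pigeonhole argument on
  prefix sums shows that it is generated by multisets U with level g + |U| < |G|, where
  level g = \<Sum> g. The number of multisets of size n containing one of finitely many
  generators with multiplicities at most c is a polynomial in n for n \<ge> (d+1)(c-1) + 1.
  Summing over g, |hA| is a polynomial in h once h \<ge> (d+1)|G| - 3(d+1) + 2, which follows
  from h \<ge> (d+1)! vol - 1 - 3d.
*)
theory Submission
  imports Defs "HOL-Library.Multiset" "HOL-Real_Asymp.Real_Asymp"
begin

lemma frac_add_of_nat: "0 \<le> x \<Longrightarrow> x < 1 \<Longrightarrow> frac (x + of_nat n) = x"
  using frac_add_of_int_right[of x "int n"] frac_eq[of x] by simp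

lemma Ints_eqI: "a \<in> \<int> \<Longrightarrow> b \<in> \<int> \<Longrightarrow> \<bar>a - b\<bar> < 1 \<Longrightarrow> a = b" for a b :: real
  by (elim Ints_cases) auto

lemma binomial_mult_fact_ge:
  assumes "d \<le> K"
  shows "(real K - real d) ^ d \<le> real (K choose d) * fact d"
proof -
  have "(real K - real d) ^ d = (\<Prod>i\<in>{0..<d}. real K - real d)" by simp
  also have "\<dots> \<le> (\<Prod>i\<in>{0..<d}. real K - of_nat i)"
    using assms by (intro prod_mono) auto
  also have "\<dots> = real (K choose d) * fact d"
    by (simp add: binomial_gbinomial gbinomial_mult_fact')
  finally show ?thesis .
qed

lemma binomial_le_card_multisets_of_size:
  assumes "finite I" "card I = Suc d" "m \<le> d"
  shows "K choose d \<le> card (multisets_of_size I (K - m))"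
proof -
  have "card (multisets_of_size I (K - m)) = (d + (K - m)) choose d"
    using assms binomial_symmetric[of "K - m" "d + (K - m)"] by (simp add: card_multisets_of_size)
  moreover have "K \<le> d + (K - m)" using assms by simp
  ultimately show ?thesis by (simp add: binomial_right_mono)
qed

lemma sumset_eq_sum_lists:
  "sumset h A = {sum_list xs | xs. length xs = h \<and> set xs \<subseteq> A}"
  for A :: "'a::comm_monoid_add set"
proof (induction h)
  case (Suc h)
  show ?case
  proof (intro equalityI subsetI)
    fix z assume "z \<in> sumset (Suc h) A"
    then obtain xs y where "z = sum_list xs + y" "length xs = h" "set xs \<subseteq> A" "y \<in> A"
      using Suc by auto
    then show "z \<in> {sum_list xs | xs. length xs = Suc h \<and> set xs \<subseteq> A}"
      by (intro CollectI exI[of _ "y # xs"]) (auto simp: add.commute)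
  next
    fix z assume "z \<in> {sum_list xs | xs. length xs = Suc h \<and> set xs \<subseteq> A}"
    then obtain y xs where "z = sum_list xs + y" "length xs = h" "set xs \<subseteq> A" "y \<in> A"
      by (auto simp: length_Suc_conv add.commute)
    moreover from this have "sum_list xs \<in> sumset h A" using Suc by blast
    ultimately show "z \<in> sumset (Suc h) A" by auto
  qed
qed simp

lemma affine_independent_coeffs_eq:
  fixes C :: "'a::real_vector set"
  assumes "\<not> affine_dependent C" "finite C"
    and "sum u C = sum u' C" "(\<Sum>v\<in>C. u v *\<^sub>R v) = (\<Sum>v\<in>C. u' v *\<^sub>R v)" "v \<in> C"
  shows "u v = u' v"
proof (rule ccontr)
  assume "u v \<noteq> u' v"
  with assms(3-5) have "affine_dependent C"
    unfolding affine_dependent_explicit_finite[OF assms(2)]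
    by (intro exI[of _ "\<lambda>v. u v - u' v"]) (auto simp: sum_subtractf scaleR_diff_left)
  with assms(1) show False by blast
qed

lemma convex_hull_eq_simplex_imp_vertices_subset:
  fixes C :: "'a::euclidean_space set"
  assumes "\<not> affine_dependent C" "convex hull A = convex hull C"
  shows "C \<subseteq> A"
proof
  fix v assume "v \<in> C"
  then have "v extreme_point_of (convex hull A)"
    using extreme_point_of_convex_hull_affine_independent[OF assms(1)] assms(2) by simp
  then show "v \<in> A" by (rule extreme_point_of_convex_hull)
qed

lemma int_points_add: "x \<in> int_points \<Longrightarrow> y \<in> int_points \<Longrightarrow> x + y \<in> int_points"
  by (auto simp: int_points_def)

lemma int_points_diff: "x \<in> int_points \<Longrightarrow> y \<in> int_points \<Longrightarrow> x - y \<in> int_points"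
  by (auto simp: int_points_def)

lemma int_points_scaleR: "c \<in> \<int> \<Longrightarrow> x \<in> int_points \<Longrightarrow> c *\<^sub>R x \<in> int_points"
  by (auto simp: int_points_def)

lemma int_points_sum: "(\<And>v. v \<in> S \<Longrightarrow> f v \<in> int_points) \<Longrightarrow> sum f S \<in> int_points"
  by (induction S rule: infinite_finite_induct) (auto intro: int_points_add simp: int_points_def)

lemma int_points_sum_list: "set xs \<subseteq> int_points \<Longrightarrow> sum_list xs \<in> int_points"
  by (induction xs) (auto intro: int_points_add simp: int_points_def)

section \<open>Eventually polynomial functions\<close>

text \<open>Counting functions are indexed by \<open>int\<close> and vanish at negative arguments; since thresholds
  can be negative, agreement of the polynomial with these zeros is part of the claim.\<close>
definition polynomial_from :: "int \<Rightarrow> (int \<Rightarrow> 'a::comm_ring_1) \<Rightarrow> bool" where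
  "polynomial_from N f \<longleftrightarrow> (\<exists>p. \<forall>n\<ge>N. f n = poly p (of_int n))"

lemma polynomial_from_mono: "polynomial_from N f \<Longrightarrow> N \<le> M \<Longrightarrow> polynomial_from M f"
  unfolding polynomial_from_def by force

lemma polynomial_from_sum:
  "(\<And>t. t \<in> T \<Longrightarrow> polynomial_from N (f t)) \<Longrightarrow> polynomial_from N (\<lambda>n. \<Sum>t\<in>T. f t n)"
proof (induction T rule: infinite_finite_induct)
  case (insert t T)
  then obtain p q where "\<forall>n\<ge>N. f t n = poly p (of_int n)" "\<forall>n\<ge>N. (\<Sum>t\<in>T. f t n) = poly q (of_int n)"
    unfolding polynomial_from_def by blast
  then show ?case
    using insert.hyps unfolding polynomial_from_def by (intro exI[of _ "p + q"]) simp
qed (auto simp: polynomial_from_def intro: exI[of _ 0])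

lemma polynomial_from_shift:
  assumes "polynomial_from N f"
  shows "polynomial_from (N + a) (\<lambda>n. f (n - a))"
proof -
  obtain p where "\<forall>n\<ge>N. f n = poly p (of_int n)"
    using assms unfolding polynomial_from_def by blast
  then show ?thesis
    unfolding polynomial_from_def
    by (intro exI[of _ "pcompose p [:- of_int a, 1:]"]) (simp add: poly_pcompose)
qed

lemma gbinomial_polynomial: "\<exists>p. \<forall>x. poly p x = (x + c) gchoose r"
  for c :: "'a::field_char_0"
proof
  have "(x + c) gchoose r = (\<Prod>i<r. x + c - of_nat i) / fact r" for x
    using gbinomial_mult_fact'[of "x + c" r] by (simp add: atLeast0LessThan field_simps)
  then show "\<forall>x. poly (smult (1 / fact r) (\<Prod>i<r. [:c - of_nat i, 1:])) x = (x + c) gchoose r"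
    by (simp add: poly_prod algebra_simps)
qed

lemma polynomial_from_card_msets_of_size:
  assumes "finite K"
  shows "polynomial_from (1 - int (card K))
           (\<lambda>n. of_nat (card {Y. set_mset Y \<subseteq> K \<and> int (size Y) = n}) :: 'a::field_char_0)"
proof (cases "K = {}")
  case True
  have "{Y. set_mset Y \<subseteq> K \<and> int (size Y) = n} = {}" if "n \<ge> 1" for n
    using True that by auto
  then show ?thesis
    using True unfolding polynomial_from_def by (intro exI[of _ 0]) simp
next
  case False
  define k where "k = card K - 1"
  have k: "card K = Suc k" using False assms by (simp add: k_def card_gt_0_iff)
  obtain p :: "'a poly" where p: "\<And>x. poly p x = (x + of_nat k) gchoose k"
    using gbinomial_polynomial by blast
  have "of_nat (card {Y. set_mset Y \<subseteq> K \<and> int (size Y) = n}) = poly p (of_int n)"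
    if n: "n \<ge> 1 - int (card K)" for n
  proof (cases "n \<ge> 0")
    case True
    have "{Y. set_mset Y \<subseteq> K \<and> int (size Y) = n} = multisets_of_size K (nat n)"
      using True by (auto simp: multisets_of_size_def)
    then have "card {Y. set_mset Y \<subseteq> K \<and> int (size Y) = n} = (nat n + k) choose k"
      using assms k binomial_symmetric[of "nat n" "k + nat n"]
      by (simp add: card_multisets_of_size add.commute)
    then show ?thesis
      using True by (simp add: p binomial_gbinomial)
  next
    case False
    have "(of_int n + of_nat k :: 'a) = of_nat (nat (n + int k))"
      using n k by simp
    moreover have "nat (n + int k) < k" using False n k by auto
    ultimately have "poly p (of_int n) = 0"
      by (simp add: p binomial_gbinomial[symmetric])
    then show ?thesis using False by simp
  qed
  then show ?thesis unfolding polynomial_from_def by blast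
qed

section \<open>Multisets containing one of finitely many generators\<close>

lemma finite_msubsets: "finite {t. t \<subseteq># M}"
proof (rule finite_subset)
  show "{t. t \<subseteq># M} \<subseteq> (\<Union>n\<le>size M. multisets_of_size (set_mset M) n)"
    by (auto simp: multisets_of_size_def size_mset_mono intro: mset_subset_eqD)
qed auto

lemma size_eq_sum_count:
  assumes "finite I" "set_mset t \<subseteq> I"
  shows "size t = (\<Sum>i\<in>I. count t i)"
  unfolding size_multiset_overloaded_eq
  using assms by (intro sum.mono_neutral_left) (auto simp: not_in_iff)

definition box_mset :: "'a set \<Rightarrow> nat \<Rightarrow> 'a multiset" where
  "box_mset I c = (\<Sum>i\<in>I. replicate_mset c i)"

lemma count_box_mset: "finite I \<Longrightarrow> count (box_mset I c) i = (if i \<in> I then c else 0)"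
  by (simp add: box_mset_def count_sum)

lemma subset_box_msetI:
  "finite I \<Longrightarrow> set_mset U \<subseteq> I \<Longrightarrow> (\<And>i. count U i \<le> c) \<Longrightarrow> U \<subseteq># box_mset I c"
  by (auto simp: subseteq_mset_def count_box_mset not_in_iff[symmetric])

lemma set_mset_subset_box_mset:
  "finite I \<Longrightarrow> t \<subseteq># box_mset I c \<Longrightarrow> set_mset t \<subseteq> I"
  by (metis count_box_mset count_eq_zero_iff mset_subset_eq_count subsetI le_zero_eq)

lemma diff_truncation_subset:
  assumes "finite I" "set_mset Y \<subseteq> I"
  shows "set_mset (Y - Y \<inter># box_mset I c) \<subseteq> {i\<in>I. count (Y \<inter># box_mset I c) i = c}"
  using assms count_box_mset[OF assms(1), of c]
  by (auto simp: in_diff_count split: if_splits)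

lemma add_truncation:
  assumes I: "finite I" and t: "t \<subseteq># box_mset I c" and Z: "set_mset Z \<subseteq> {i\<in>I. count t i = c}"
  shows "(t + Z) \<inter># box_mset I c = t"
proof (rule multiset_eqI)
  fix i
  show "count ((t + Z) \<inter># box_mset I c) i = count t i"
  proof (cases "i \<in># Z")
    case True
    then show ?thesis using Z by (auto simp: count_box_mset[OF I])
  next
    case False
    then show ?thesis using mset_subset_eq_count[OF t, of i] by (simp add: not_in_iff)
  qed
qed

lemma card_msets_with_truncation:
  fixes I :: "'a set" and c :: nat
  assumes I: "finite I" and t: "t \<subseteq># box_mset I c"
  defines "K \<equiv> {i\<in>I. count t i = c}"
  shows "card {Y. set_mset Y \<subseteq> I \<and> int (size Y) = n \<and> Y \<inter># box_mset I c = t}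
       = card {Z. set_mset Z \<subseteq> K \<and> int (size Z) = n - int (size t)}"
proof (rule bij_betw_same_card[of "\<lambda>Y. Y - t"], rule bij_betw_byWitness[where f' = "\<lambda>Z. t + Z"])
  have tI: "set_mset t \<subseteq> I" using set_mset_subset_box_mset[OF I t] .
  show "\<forall>Y\<in>{Y. set_mset Y \<subseteq> I \<and> int (size Y) = n \<and> Y \<inter># box_mset I c = t}. t + (Y - t) = Y"
    by (auto intro!: multiset_eqI)
  show "\<forall>Z\<in>{Z. set_mset Z \<subseteq> K \<and> int (size Z) = n - int (size t)}. t + Z - t = Z"
    by simp
  show "(\<lambda>Y. Y - t) ` {Y. set_mset Y \<subseteq> I \<and> int (size Y) = n \<and> Y \<inter># box_mset I c = t}
      \<subseteq> {Z. set_mset Z \<subseteq> K \<and> int (size Z) = n - int (size t)}"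
  proof safe
    fix Y assume Y: "set_mset Y \<subseteq> I" "t = Y \<inter># box_mset I c"
    show "i \<in> K" if "i \<in># Y - Y \<inter># box_mset I c" for i
      using that diff_truncation_subset[OF I Y(1), of c] by (auto simp: K_def Y(2))
    have "size (Y - Y \<inter># box_mset I c) = size Y - size (Y \<inter># box_mset I c)"
      by (simp only: size_Diff_submset subset_mset.inf_le1)
    moreover have "size (Y \<inter># box_mset I c) \<le> size Y"
      by (simp add: size_mset_mono)
    ultimately show "int (size (Y - Y \<inter># box_mset I c)) = int (size Y) - int (size (Y \<inter># box_mset I c))"
      by simp
  qed
  show "(\<lambda>Z. t + Z) ` {Z. set_mset Z \<subseteq> K \<and> int (size Z) = n - int (size t)}
      \<subseteq> {Y. set_mset Y \<subseteq> I \<and> int (size Y) = n \<and> Y \<inter># box_mset I c = t}"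
  proof safe
    fix Z assume Z: "set_mset Z \<subseteq> K" "int (size Z) = n - int (size t)"
    show "i \<in> I" if "i \<in># t + Z" for i
      using that Z tI by (auto simp: K_def)
    show "int (size (t + Z)) = n" using Z by simp
    show "(t + Z) \<inter># box_mset I c = t"
      using add_truncation[OF I t] Z by (simp add: K_def)
  qed
qed

lemma size_add_card_le:
  fixes c :: nat
  assumes I: "finite I" and t: "t \<subseteq># box_mset I c"
  shows "size t + card I \<le> card I * c + card {i\<in>I. count t i = c}"
proof -
  have "size t + card I = (\<Sum>i\<in>I. count t i + 1)"
    using size_eq_sum_count[OF I set_mset_subset_box_mset[OF I t]] by (simp only: sum.distrib) simp
  also have "\<dots> \<le> (\<Sum>i\<in>I. c + (if count t i = c then 1 else 0))"
  proof (intro sum_mono)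
    fix i assume "i \<in> I"
    then have "count t i \<le> c"
      using mset_subset_eq_count[OF t, of i] by (simp add: count_box_mset[OF I])
    then show "count t i + 1 \<le> c + (if count t i = c then 1 else 0)" by auto
  qed
  also have "\<dots> = card I * c + card {i\<in>I. count t i = c}"
    using I by (simp add: sum.distrib sum.If_cases Int_def)
  finally show ?thesis .
qed

text \<open>A multiset over \<open>I\<close> contains a generator iff its truncation at height \<open>c\<close> does.\<close>
lemma card_msets_containing_eq_sum:
  fixes I :: "'a set" and Gen :: "'a multiset set" and c :: nat
  assumes I: "finite I" and Gen: "\<And>U. U \<in> Gen \<Longrightarrow> set_mset U \<subseteq> I \<and> (\<forall>i. count U i \<le> c)"
  shows "card {Y. set_mset Y \<subseteq> I \<and> int (size Y) = n \<and> (\<exists>U\<in>Gen. U \<subseteq># Y)}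
       = (\<Sum>t\<in>{t. t \<subseteq># box_mset I c \<and> (\<exists>U\<in>Gen. U \<subseteq># t)}.
            card {Y. set_mset Y \<subseteq> I \<and> int (size Y) = n \<and> Y \<inter># box_mset I c = t})"
proof -
  define M where "M = box_mset I c"
  define F where "F t = {Y. set_mset Y \<subseteq> I \<and> int (size Y) = n \<and> Y \<inter># M = t}" for t
  have Gen_M: "U \<subseteq># M" if "U \<in> Gen" for U
    using Gen[OF that] I by (simp add: M_def subset_box_msetI)
  have "{Y. set_mset Y \<subseteq> I \<and> int (size Y) = n \<and> (\<exists>U\<in>Gen. U \<subseteq># Y)}
      = (\<Union>t\<in>{t. t \<subseteq># M \<and> (\<exists>U\<in>Gen. U \<subseteq># t)}. F t)"
  proof (intro equalityI subsetI)
    fix Y assume "Y \<in> {Y. set_mset Y \<subseteq> I \<and> int (size Y) = n \<and> (\<exists>U\<in>Gen. U \<subseteq># Y)}"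
    then obtain U where "set_mset Y \<subseteq> I" "int (size Y) = n" "U \<in> Gen" "U \<subseteq># Y" by blast
    moreover from this have "U \<subseteq># Y \<inter># M" using Gen_M by simp
    ultimately show "Y \<in> (\<Union>t\<in>{t. t \<subseteq># M \<and> (\<exists>U\<in>Gen. U \<subseteq># t)}. F t)" by (auto simp: F_def)
  qed (auto simp: F_def intro: subset_mset.order_trans)
  moreover have "finite {t. t \<subseteq># M \<and> (\<exists>U\<in>Gen. U \<subseteq># t)}"
    by (rule finite_subset[OF _ finite_msubsets[of M]]) auto
  moreover have "finite (F t)" for t
    by (rule finite_subset[OF _ finite_multisets_of_size[OF I, of "nat n"]])
      (auto simp: F_def multisets_of_size_def)
  ultimately show ?thesis
    unfolding M_def[symmetric] F_def[symmetric] by (simp only:) (rule card_UN_disjoint, auto simp: F_def)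
qed

lemma polynomial_from_card_msets_containing:
  fixes I :: "'a set" and Gen :: "'a multiset set" and c :: nat
  assumes I: "finite I" and Gen: "\<And>U. U \<in> Gen \<Longrightarrow> set_mset U \<subseteq> I \<and> (\<forall>i. count U i \<le> c)"
  shows "polynomial_from (int (card I) * (int c - 1) + 1)
           (\<lambda>n. of_nat (card {Y. set_mset Y \<subseteq> I \<and> int (size Y) = n \<and> (\<exists>U\<in>Gen. U \<subseteq># Y)})
              :: 'b::field_char_0)"
proof -
  have "polynomial_from (int (card I) * (int c - 1) + 1)
      (\<lambda>n. of_nat (card {Y. set_mset Y \<subseteq> I \<and> int (size Y) = n \<and> Y \<inter># box_mset I c = t}) :: 'b)"
    if t: "t \<subseteq># box_mset I c" for t
  proof -
    define K where "K = {i\<in>I. count t i = c}"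
    have "finite K" using I by (simp add: K_def)
    have "polynomial_from (1 - int (card K) + int (size t))
        (\<lambda>n. of_nat (card {Z. set_mset Z \<subseteq> K \<and> int (size Z) = n - int (size t)}) :: 'b)"
      by (rule polynomial_from_shift[OF polynomial_from_card_msets_of_size[OF \<open>finite K\<close>]])
    then have "polynomial_from (1 - int (card K) + int (size t))
        (\<lambda>n. of_nat (card {Y. set_mset Y \<subseteq> I \<and> int (size Y) = n \<and> Y \<inter># box_mset I c = t}) :: 'b)"
      by (simp add: card_msets_with_truncation[OF I t] K_def)
    moreover have "1 - int (card K) + int (size t) \<le> int (card I) * (int c - 1) + 1"
      using size_add_card_le[OF I t] unfolding K_def by (simp add: algebra_simps flip: of_nat_mult of_nat_add)
    ultimately show ?thesis by (rule polynomial_from_mono)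
  qed
  then have "polynomial_from (int (card I) * (int c - 1) + 1)
      (\<lambda>n. \<Sum>t\<in>{t. t \<subseteq># box_mset I c \<and> (\<exists>U\<in>Gen. U \<subseteq># t)}.
         of_nat (card {Y. set_mset Y \<subseteq> I \<and> int (size Y) = n \<and> Y \<inter># box_mset I c = t}) :: 'b)"
    by (intro polynomial_from_sum) simp
  then show ?thesis
    by (simp only: card_msets_containing_eq_sum[OF I Gen] of_nat_sum)
qed

section \<open>Lattice points in dilates of a convex body\<close>

lemma measure_lattice_unit_boxes:
  fixes X :: "(real ^ 'n) set"
  assumes "finite X" "X \<subseteq> int_points"
  shows "measure lebesgue (\<Union>x\<in>X. box x (x + 1)) = real (card X)"
proof -
  have "measure lebesgue (\<Union>x\<in>X. box x (x + 1)) = (\<Sum>x\<in>X. measure lebesgue (box x (x + 1)))"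
  proof (rule measure_UNION')
    show "pairwise (\<lambda>x y. disjnt (box x (x + 1)) (box y (y + 1))) X"
    proof (rule pairwiseI)
      fix x y assume xy: "x \<in> X" "y \<in> X" "x \<noteq> y"
      then obtain i where i: "x $ i \<noteq> y $ i" by (metis vec_eq_iff)
      have "x $ i \<in> \<int>" "y $ i \<in> \<int>" using xy assms(2) by (auto simp: int_points_def)
      then have "\<bar>x $ i - y $ i\<bar> \<ge> 1" using i Ints_eqI by force
      show "disjnt (box x (x + 1)) (box y (y + 1))"
        unfolding disjnt_iff
      proof (intro allI notI)
        fix z assume "z \<in> box x (x + 1) \<and> z \<in> box y (y + 1)"
        then have "x $ i < z $ i" "z $ i < x $ i + 1" "y $ i < z $ i" "z $ i < y $ i + 1"
          by (auto simp: mem_box_cart)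
        with \<open>\<bar>x $ i - y $ i\<bar> \<ge> 1\<close> show False by linarith
      qed
    qed
  qed (use assms in auto)
  also have "\<dots> = real (card X)"
  proof -
    have "measure lebesgue (box x (x + 1)) = 1" for x :: "real ^ 'n"
      by (subst measure_completion, simp, subst measure_lborel_box)
        (auto simp: Basis_vec_def inner_axis intro!: prod.neutral)
    then show ?thesis by simp
  qed
  finally show ?thesis .
qed

lemma unit_boxes_subset_dilation:
  fixes D :: "(real ^ 'n) set"
  assumes r: "r > 0" and ball: "ball q r \<subseteq> D" and D: "convex D" and K: "K > 0"
    and X: "\<And>x. x \<in> X \<Longrightarrow> (1 / K) *\<^sub>R x \<in> D"
  defines "t \<equiv> real CARD('n) / r"
  shows "(\<Union>x\<in>X. box x (x + 1)) \<subseteq> (\<lambda>z. (K + t) *\<^sub>R z + (- t *\<^sub>R q)) ` D"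
proof safe
  fix x y assume x: "x \<in> X" and y: "y \<in> box x (x + 1)"
  \<comment> \<open>\<open>y = x + e\<close> is \<open>K + t\<close> times a convex combination of \<open>x / K\<close> and \<open>q + e / t \<in> ball q r\<close>.\<close>
  define e where "e = y - x"
  have "0 < e $ i \<and> e $ i < 1" for i
  proof -
    have "x $ i < y $ i \<and> y $ i < x $ i + 1" using y by (simp add: mem_box_cart)
    then show ?thesis by (simp add: e_def)
  qed
  then have "(\<Sum>i\<in>UNIV. \<bar>e $ i\<bar>) < (\<Sum>i\<in>(UNIV :: 'n set). 1)"
    by (intro sum_strict_mono) (auto simp: abs_less_iff less_trans[of _ 0])
  then have "norm e < real CARD('n)"
    using norm_le_l1_cart[of e] by simp
  have t: "t > 0" using r by (simp add: t_def)
  have "norm ((1 / t) *\<^sub>R e) < r"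
    using \<open>norm e < real CARD('n)\<close> r by (simp add: t_def field_simps)
  then have "q + (1 / t) *\<^sub>R e \<in> D" using ball by (auto simp: dist_norm)
  then have w: "(K / (K + t)) *\<^sub>R ((1 / K) *\<^sub>R x) + (t / (K + t)) *\<^sub>R (q + (1 / t) *\<^sub>R e) \<in> D"
    using X[OF x] K t by (intro convexD[OF D]) (auto simp: add_divide_distrib[symmetric])
  have "y = (K + t) *\<^sub>R ((K / (K + t)) *\<^sub>R ((1 / K) *\<^sub>R x) + (t / (K + t)) *\<^sub>R (q + (1 / t) *\<^sub>R e))
      + (- t *\<^sub>R q)"
    using K t by (simp add: e_def scaleR_add_right)
  with w show "y \<in> (\<lambda>z. (K + t) *\<^sub>R z + (- t *\<^sub>R q)) ` D" by blast
qed

lemma card_lattice_points_le: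
  fixes D :: "(real ^ 'n) set"
  assumes "compact D" "convex D" "r > 0" "ball q r \<subseteq> D" "K > 0"
    and X: "finite X" "X \<subseteq> int_points" "\<And>x. x \<in> X \<Longrightarrow> (1 / K) *\<^sub>R x \<in> D"
  shows "real (card X) \<le> (K + real CARD('n) / r) ^ CARD('n) * measure lebesgue D"
proof -
  define t where "t = real CARD('n) / r"
  have "t > 0" using \<open>r > 0\<close> by (simp add: t_def)
  have "real (card X) = measure lebesgue (\<Union>x\<in>X. box x (x + 1))"
    using measure_lattice_unit_boxes[OF X(1,2)] by simp
  also have "\<dots> \<le> measure lebesgue ((\<lambda>z. (K + t) *\<^sub>R z + (- t *\<^sub>R q)) ` D)"
  proof (rule measure_mono_fmeasurable)
    show "(\<Union>x\<in>X. box x (x + 1)) \<subseteq> (\<lambda>z. (K + t) *\<^sub>R z + (- t *\<^sub>R q)) ` D"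
      using unit_boxes_subset_dilation[OF assms(3,4,2,5) X(3)] by (simp add: t_def)
    show "(\<Union>x\<in>X. box x (x + 1)) \<in> sets lebesgue"
      using X(1) by (intro sets.finite_UN) auto
    show "(\<lambda>z. (K + t) *\<^sub>R z + (- t *\<^sub>R q)) ` D \<in> lmeasurable"
      using \<open>compact D\<close> by (intro lmeasurable_compact compact_continuous_image continuous_intros)
  qed
  also have "\<dots> = (K + t) ^ CARD('n) * measure lebesgue D"
    using \<open>t > 0\<close> \<open>K > 0\<close> by (subst measure_lebesgue_affine) simp
  finally show ?thesis by (simp add: t_def)
qed

section \<open>Lattice simplices\<close>

locale lattice_simplex =
  fixes C :: "(real ^ 'n) set"
  assumes independent: "\<not> affine_dependent C"
    and card_vertices: "card C = Suc CARD('n)"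
    and vertices_lattice: "C \<subseteq> int_points"
begin

lemma finite_vertices: "finite C"
  using independent by (rule aff_independent_finite)

lemma coeffs_eq:
  "sum u C = sum u' C \<Longrightarrow> (\<Sum>v\<in>C. u v *\<^sub>R v) = (\<Sum>v\<in>C. u' v *\<^sub>R v) \<Longrightarrow> v \<in> C \<Longrightarrow> u v = u' v"
  using affine_independent_coeffs_eq[OF independent finite_vertices] .

lemma ball_subset_hull:
  obtains q r where "r > 0" "ball q r \<subseteq> convex hull C"
proof -
  have "interior (convex hull C) \<noteq> {}"
    using interior_convex_hull_eq_empty[of C] card_vertices independent by simp
  then obtain q where "q \<in> interior (convex hull C)" by blast
  then obtain r where "r > 0" "ball q r \<subseteq> interior (convex hull C)"
    using open_contains_ball open_interior by blast
  with that show ?thesis using interior_subset by blast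
qed

text \<open>Coefficient vectors \<open>g\<close> of the lattice points \<open>\<Sum>v\<in>C. g v *\<^sub>R (v, 1)\<close> of \<open>\<int>\<^sup>d \<times> \<int>\<close> lying in the
  half-open parallelepiped spanned by the vectors \<open>(v, 1)\<close>, \<open>v \<in> C\<close>.\<close>
definition par_points :: "(real ^ 'n \<Rightarrow> real) set" where
  "par_points = {g. (\<forall>v. 0 \<le> g v \<and> g v < 1) \<and> (\<forall>v. v \<notin> C \<longrightarrow> g v = 0)
                    \<and> sum g C \<in> \<int> \<and> (\<Sum>v\<in>C. g v *\<^sub>R v) \<in> int_points}"

definition level :: "(real ^ 'n \<Rightarrow> real) \<Rightarrow> nat" where
  "level g = nat \<lfloor>sum g C\<rfloor>"

lemma level_par_points: "g \<in> par_points \<Longrightarrow> real (level g) = sum g C"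
  by (auto simp: par_points_def level_def sum_nonneg elim!: Ints_cases)

lemma level_le:
  assumes "g \<in> par_points"
  shows "level g \<le> CARD('n)"
proof -
  have "sum g C < (\<Sum>v\<in>C. 1)"
    using finite_vertices card_vertices assms by (intro sum_strict_mono) (auto simp: par_points_def)
  then show ?thesis using level_par_points[OF assms] card_vertices by simp
qed

definition lift :: "(real ^ 'n \<Rightarrow> real) \<Rightarrow> (real ^ 'n) multiset \<Rightarrow> real ^ 'n" where
  "lift g Y = (\<Sum>v\<in>C. (g v + real (count Y v)) *\<^sub>R v)"

lemma sum_count_eq_size: "set_mset Y \<subseteq> C \<Longrightarrow> (\<Sum>v\<in>C. real (count Y v)) = real (size Y)"
  using size_eq_sum_count[OF finite_vertices] by simp

lemma lift_eq_imp_eq: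
  assumes g: "g \<in> par_points" "g' \<in> par_points" and Y: "set_mset Y \<subseteq> C" "set_mset Y' \<subseteq> C"
    and lev: "level g + size Y = level g' + size Y'" and eq: "lift g Y = lift g' Y'"
  shows "g = g' \<and> Y = Y'"
proof -
  have sums: "(\<Sum>v\<in>C. g v + real (count Y v)) = (\<Sum>v\<in>C. g' v + real (count Y' v))"
    using lev level_par_points[OF g(1)] level_par_points[OF g(2)]
    by (simp add: sum.distrib sum_count_eq_size[OF Y(1)] sum_count_eq_size[OF Y(2)]
        flip: of_nat_add)
  have coeff: "g v + real (count Y v) = g' v + real (count Y' v)" if "v \<in> C" for v
    using coeffs_eq[OF sums _ that] eq by (simp add: lift_def)
  have "g v = g' v" for v
  proof (cases "v \<in> C")
    case True
    have "g v - g' v = real (count Y' v) - real (count Y v)"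
      using coeff[OF True] by linarith
    then have "g v - g' v \<in> \<int>" by simp
    moreover have "0 \<le> g v" "g v < 1" "0 \<le> g' v" "g' v < 1"
      using g by (auto simp: par_points_def)
    then have "\<bar>(g v - g' v) - 0\<bar> < 1" by linarith
    ultimately show ?thesis using Ints_eqI[of "g v - g' v" 0] by simp
  qed (use g in \<open>auto simp: par_points_def\<close>)
  moreover have "count Y v = count Y' v" for v
  proof (cases "v \<in> C")
    case True
    then show ?thesis using coeff[OF True] \<open>g v = g' v\<close> by simp
  next
    case False
    then have "v \<notin># Y" "v \<notin># Y'" using Y by auto
    then show ?thesis by (simp add: not_in_iff)
  qed
  ultimately show ?thesis by (auto intro: multiset_eqI)
qed

lemma lift_int_points:
  assumes "g \<in> par_points"
  shows "lift g Y \<in> int_points"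
proof -
  have "(\<Sum>v\<in>C. real (count Y v) *\<^sub>R v) \<in> int_points"
    using vertices_lattice by (intro int_points_sum int_points_scaleR) auto
  then show ?thesis
    using assms unfolding lift_def scaleR_add_left sum.distrib par_points_def
    by (auto intro: int_points_add)
qed

lemma lift_in_dilated_hull:
  assumes g: "g \<in> par_points" and Y: "set_mset Y \<subseteq> C" and K: "level g + size Y = K" "K > 0"
  shows "(1 / real K) *\<^sub>R lift g Y \<in> convex hull C"
  unfolding convex_hull_finite[OF finite_vertices] mem_Collect_eq
proof (intro exI conjI)
  let ?u = "\<lambda>v. (g v + real (count Y v)) / real K"
  show "\<forall>v\<in>C. 0 \<le> ?u v" using g by (auto simp: par_points_def)
  have "(\<Sum>v\<in>C. g v + real (count Y v)) = real K"
    using K level_par_points[OF g] by (simp add: sum.distrib sum_count_eq_size[OF Y] flip: of_nat_add)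
  then show "sum ?u C = 1" using K by (simp add: sum_divide_distrib[symmetric])
  show "(\<Sum>v\<in>C. ?u v *\<^sub>R v) = (1 / real K) *\<^sub>R lift g Y"
    by (simp add: lift_def scaleR_sum_right divide_inverse_commute)
qed

lemma card_mult_binomial_le:
  assumes G: "finite G" "G \<subseteq> par_points" and ball: "r > 0" "ball q r \<subseteq> convex hull C"
    and K: "CARD('n) \<le> K"
  shows "real (card G) * real (K choose CARD('n))
           \<le> (real K + real CARD('n) / r) ^ CARD('n) * measure lebesgue (convex hull C)"
proof -
  define S where "S = (SIGMA g:G. multisets_of_size C (K - level g))"
  have K_pos: "K > 0" using K zero_less_card_finite[where 'a='n] by linarith
  have level_K: "level g \<le> K" if "g \<in> G" for g
    using level_le[of g] that G K by auto
  have "finite S" using G finite_vertices by (auto simp: S_def finite_multisets_of_size)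
  have inj: "inj_on (\<lambda>(g, Y). lift g Y) S"
  proof (intro inj_onI, clarify)
    fix g Y g' Y' assume "(g, Y) \<in> S" "(g', Y') \<in> S" "lift g Y = lift g' Y'"
    then show "g = g' \<and> Y = Y'"
      using level_K G(2) by (intro lift_eq_imp_eq) (auto simp: S_def multisets_of_size_def)
  qed
  have "(\<Sum>g\<in>G. real (K choose CARD('n)))
      \<le> (\<Sum>g\<in>G. real (card (multisets_of_size C (K - level g))))"
    using G level_le finite_vertices card_vertices
    by (intro sum_mono) (auto simp: binomial_le_card_multisets_of_size)
  then have "real (card G) * real (K choose CARD('n))
      \<le> (\<Sum>g\<in>G. real (card (multisets_of_size C (K - level g))))"
    by simp
  also have "\<dots> = real (card S)"
    using G finite_vertices by (simp add: S_def card_SigmaI finite_multisets_of_size)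
  also have "\<dots> = real (card ((\<lambda>(g, Y). lift g Y) ` S))"
    by (simp add: card_image[OF inj])
  also have "\<dots> \<le> (real K + real CARD('n) / r) ^ CARD('n) * measure lebesgue (convex hull C)"
  proof (rule card_lattice_points_le)
    show "compact (convex hull C)"
      using finite_vertices by (rule finite_imp_compact_convex_hull)
    show "real K > 0" using K_pos by simp
    show "(\<lambda>(g, Y). lift g Y) ` S \<subseteq> int_points"
      using G(2) lift_int_points by (auto simp: S_def)
    show "(1 / real K) *\<^sub>R x \<in> convex hull C" if "x \<in> (\<lambda>(g, Y). lift g Y) ` S" for x
      using that level_K G(2) K_pos
      by (auto simp: S_def multisets_of_size_def intro!: lift_in_dilated_hull)
  qed (use \<open>finite S\<close> ball in auto)
  finally show ?thesis .
qed

text \<open>The lattice points \<open>lift g Y\<close>, \<open>size Y = K - level g\<close>, are distinct and lie in \<open>K\<close> times the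
  simplex; comparing with the volume of a slightly larger dilate and letting \<open>K \<rightarrow> \<infinity>\<close> gives the bound.\<close>
lemma card_subset_par_points_le:
  assumes G: "finite G" "G \<subseteq> par_points"
  shows "real (card G) \<le> fact CARD('n) * measure lebesgue (convex hull C)"
proof -
  obtain q r where ball: "r > 0" "ball q r \<subseteq> convex hull C" using ball_subset_hull .
  define d where "d = CARD('n)"
  define t where "t = real d / r"
  define vol where "vol = measure lebesgue (convex hull C)"
  have "real (card G) \<le> fact d * vol * ((real K + t) / (real K - real d)) ^ d" if "d < K" for K
  proof -
    have "real (card G) * (real K - real d) ^ d \<le> real (card G) * (real (K choose d) * fact d)"
      using binomial_mult_fact_ge[of d K] that by (intro mult_left_mono) auto
    also have "\<dots> \<le> (real K + t) ^ d * vol * fact d"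
      using card_mult_binomial_le[OF G ball, of K] that
      by (simp add: d_def t_def vol_def mult.assoc[symmetric])
    finally show ?thesis using that by (simp add: power_divide field_simps)
  qed
  moreover have "(\<lambda>K. fact d * vol * ((real K + t) / (real K - real d)) ^ d) \<longlonglongrightarrow> fact d * vol * 1 ^ d"
    by (intro tendsto_intros) real_asymp
  ultimately have "real (card G) \<le> fact d * vol * 1 ^ d"
    by (intro LIMSEQ_le_const) (auto intro: exI[of _ "Suc d"])
  then show ?thesis by (simp add: d_def vol_def)
qed

lemma finite_par_points: "finite par_points"
proof (rule ccontr)
  assume "infinite par_points"
  obtain n :: nat where n: "real n > fact CARD('n) * measure lebesgue (convex hull C)"
    using reals_Archimedean2 by blast
  obtain G where "finite G" "card G = n" "G \<subseteq> par_points"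
    using infinite_arbitrarily_large[OF \<open>infinite par_points\<close>] by blast
  with n show False using card_subset_par_points_le by force
qed

lemma card_par_points_le: "real (card par_points) \<le> fact CARD('n) * measure lebesgue (convex hull C)"
  using card_subset_par_points_le[OF finite_par_points] by simp

end

section \<open>Sums of points of a lattice simplex\<close>

locale lattice_simplex_set = lattice_simplex C for C :: "(real ^ 'n) set" +
  fixes A :: "(real ^ 'n) set"
  assumes finite_A: "finite A" and A_lattice: "A \<subseteq> int_points"
    and vertices_subset: "C \<subseteq> A" and A_subset_hull: "A \<subseteq> convex hull C"
begin

definition bary :: "real ^ 'n \<Rightarrow> real ^ 'n \<Rightarrow> real" where
  "bary a = (SOME u. (\<forall>v\<in>C. 0 \<le> u v) \<and> sum u C = 1 \<and> (\<Sum>v\<in>C. u v *\<^sub>R v) = a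
                     \<and> (\<forall>v. v \<notin> C \<longrightarrow> u v = 0))"

lemma bary:
  assumes "a \<in> A"
  shows "(\<forall>v\<in>C. 0 \<le> bary a v) \<and> sum (bary a) C = 1 \<and> (\<Sum>v\<in>C. bary a v *\<^sub>R v) = a
           \<and> (\<forall>v. v \<notin> C \<longrightarrow> bary a v = 0)"
proof -
  have "a \<in> convex hull C" using assms A_subset_hull by blast
  then obtain u where u: "\<forall>v\<in>C. 0 \<le> u v" "sum u C = 1" "(\<Sum>v\<in>C. u v *\<^sub>R v) = a"
    unfolding convex_hull_finite[OF finite_vertices] by blast
  define u' where "u' v = (if v \<in> C then u v else 0)" for v
  have "(\<forall>v\<in>C. 0 \<le> u' v) \<and> sum u' C = 1 \<and> (\<Sum>v\<in>C. u' v *\<^sub>R v) = a \<and> (\<forall>v. v \<notin> C \<longrightarrow> u' v = 0)"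
    using u by (simp add: u'_def cong: sum.cong)
  then show ?thesis
    unfolding bary_def by (rule someI[where x = u'])
qed

lemma bary_nonneg: "a \<in> A \<Longrightarrow> 0 \<le> bary a v"
  using bary[of a] by (cases "v \<in> C") auto

lemma sum_bary: "a \<in> A \<Longrightarrow> sum (bary a) C = 1"
  using bary[of a] by blast

lemma lincomb_bary: "a \<in> A \<Longrightarrow> (\<Sum>v\<in>C. bary a v *\<^sub>R v) = a"
  using bary[of a] by blast

lemma bary_outside: "a \<in> A \<Longrightarrow> v \<notin> C \<Longrightarrow> bary a v = 0"
  using bary[of a] by blast

lemma bary_vertex:
  assumes "w \<in> C"
  shows "bary w v = (if v = w then 1 else 0)"
proof -
  have w: "w \<in> A" using assms vertices_subset by blast
  show ?thesis
  proof (cases "v \<in> C")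
    case True
    have "(\<Sum>v\<in>C. (if v = w then 1 else 0) *\<^sub>R v) = (\<Sum>v\<in>C. if v = w then v else 0)"
      by (intro sum.cong) auto
    also have "\<dots> = w" using assms finite_vertices by simp
    finally have lincombs: "(\<Sum>v\<in>C. bary w v *\<^sub>R v) = (\<Sum>v\<in>C. (if v = w then 1 else 0) *\<^sub>R v)"
      using lincomb_bary[OF w] by simp
    have sums: "sum (bary w) C = (\<Sum>v\<in>C. if v = w then 1 else 0)"
      using assms finite_vertices sum_bary[OF w] by simp
    show ?thesis by (rule coeffs_eq[OF sums lincombs True])
  next
    case False
    then show ?thesis using assms bary_outside[OF w] by auto
  qed
qed

definition coords :: "(real ^ 'n) list \<Rightarrow> real ^ 'n \<Rightarrow> real" where
  "coords xs v = (\<Sum>a\<leftarrow>xs. bary a v)"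

lemma coords_Nil [simp]: "coords [] = (\<lambda>v. 0)"
  and coords_Cons [simp]: "coords (a # xs) v = bary a v + coords xs v"
  and coords_append: "coords (xs @ ys) v = coords xs v + coords ys v"
  by (auto simp: coords_def)

lemma coords_nonneg: "set xs \<subseteq> A \<Longrightarrow> 0 \<le> coords xs v"
  by (induction xs) (auto intro: add_nonneg_nonneg simp: bary_nonneg)

lemma coords_outside: "set xs \<subseteq> A \<Longrightarrow> v \<notin> C \<Longrightarrow> coords xs v = 0"
  by (induction xs) (auto simp: bary_outside)

lemma sum_coords: "set xs \<subseteq> A \<Longrightarrow> sum (coords xs) C = real (length xs)"
  by (induction xs) (auto simp: sum.distrib sum_bary)

lemma lincomb_coords: "set xs \<subseteq> A \<Longrightarrow> (\<Sum>v\<in>C. coords xs v *\<^sub>R v) = sum_list xs"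
  by (induction xs) (auto simp: sum.distrib scaleR_add_left lincomb_bary)

lemma coords_vertices: "set xs \<subseteq> C \<Longrightarrow> coords xs v = real (count (mset xs) v)"
  by (induction xs) (auto simp: bary_vertex)

definition bary_sums :: "(real ^ 'n \<Rightarrow> real) set" where
  "bary_sums = {coords xs | xs. set xs \<subseteq> A}"

definition layer :: "int \<Rightarrow> (real ^ 'n \<Rightarrow> real) set" where
  "layer h = {\<mu> \<in> bary_sums. sum \<mu> C = of_int h}"

lemma card_sumset_eq_card_layer: "card (sumset h A) = card (layer (int h))"
proof -
  define F where "F \<mu> = (\<Sum>v\<in>C. \<mu> v *\<^sub>R v)" for \<mu> :: "real ^ 'n \<Rightarrow> real"
  have "F ` layer (int h) = sumset h A"
  proof (intro equalityI subsetI)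
    fix x assume "x \<in> F ` layer (int h)"
    then show "x \<in> sumset h A"
      by (auto simp: F_def layer_def bary_sums_def sumset_eq_sum_lists sum_coords lincomb_coords)
  next
    fix x assume "x \<in> sumset h A"
    then obtain xs where "x = sum_list xs" "length xs = h" "set xs \<subseteq> A"
      by (auto simp: sumset_eq_sum_lists)
    then show "x \<in> F ` layer (int h)"
      by (intro image_eqI[of _ _ "coords xs"])
        (auto simp: F_def layer_def bary_sums_def sum_coords lincomb_coords)
  qed
  moreover have "inj_on F (layer (int h))"
  proof (rule inj_onI)
    fix \<mu> \<mu>' assume \<mu>: "\<mu> \<in> layer (int h)" "\<mu>' \<in> layer (int h)" "F \<mu> = F \<mu>'"
    show "\<mu> = \<mu>'"
    proof
      fix v show "\<mu> v = \<mu>' v"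
      proof (cases "v \<in> C")
        case True
        with \<mu> show ?thesis by (intro coeffs_eq[of \<mu> \<mu>']) (auto simp: F_def layer_def)
      next
        case False
        with \<mu> show ?thesis by (auto simp: layer_def bary_sums_def coords_outside)
      qed
    qed
  qed
  ultimately show ?thesis by (metis card_image)
qed

lemma finite_layer: "finite (layer h)"
proof (rule finite_subset)
  show "layer h \<subseteq> coords ` {xs. set xs \<subseteq> A \<and> length xs = nat h}"
    by (auto simp: layer_def bary_sums_def sum_coords)
  show "finite (coords ` {xs. set xs \<subseteq> A \<and> length xs = nat h})"
    using finite_lists_length_eq[OF finite_A] by simp
qed

definition frac_part :: "(real ^ 'n \<Rightarrow> real) \<Rightarrow> real ^ 'n \<Rightarrow> real" where
  "frac_part \<mu> v = frac (\<mu> v)"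

definition Fracs :: "(real ^ 'n \<Rightarrow> real) set" where
  "Fracs = frac_part ` bary_sums"

lemma Fracs_subset_par_points: "Fracs \<subseteq> par_points"
proof
  fix g assume "g \<in> Fracs"
  then obtain xs where xs: "set xs \<subseteq> A" and g: "g = frac_part (coords xs)"
    by (auto simp: Fracs_def bary_sums_def)
  have g_eq: "g v = coords xs v - of_int \<lfloor>coords xs v\<rfloor>" for v
    by (simp add: g frac_part_def frac_def)
  have "sum g C = real (length xs) - (\<Sum>v\<in>C. of_int \<lfloor>coords xs v\<rfloor>)"
    by (simp add: g_eq sum_subtractf sum_coords[OF xs])
  then have "sum g C \<in> \<int>" by (auto intro!: Ints_diff Ints_sum)
  moreover have "(\<Sum>v\<in>C. g v *\<^sub>R v) = sum_list xs - (\<Sum>v\<in>C. of_int \<lfloor>coords xs v\<rfloor> *\<^sub>R v)"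
    by (simp add: g_eq scaleR_diff_left sum_subtractf lincomb_coords[OF xs])
  moreover have "sum_list xs \<in> int_points"
    using xs A_lattice by (intro int_points_sum_list) auto
  moreover have "(\<Sum>v\<in>C. of_int \<lfloor>coords xs v\<rfloor> *\<^sub>R v) \<in> int_points"
    using vertices_lattice by (intro int_points_sum int_points_scaleR) auto
  ultimately show "g \<in> par_points"
    by (auto simp: par_points_def g frac_part_def frac_lt_1 coords_outside[OF xs] int_points_diff)
qed

lemma finite_Fracs: "finite Fracs"
  using finite_subset[OF Fracs_subset_par_points finite_par_points] .

lemma card_Fracs_le: "real (card Fracs) \<le> fact CARD('n) * measure lebesgue (convex hull C)"
  using card_mono[OF finite_par_points Fracs_subset_par_points] card_par_points_le by linarith

lemma frac_part_coords_in_Fracs: "set xs \<subseteq> A \<Longrightarrow> frac_part (coords xs) \<in> Fracs"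
  by (auto simp: Fracs_def bary_sums_def)

text \<open>By pigeonhole, a long word has an infix with integral coordinates, which can be removed.\<close>
lemma equal_frac_prefixes:
  assumes "set xs \<subseteq> A" "card Fracs \<le> length xs"
  obtains a b where "a < b" "b \<le> length xs"
    "frac_part (coords (take a xs)) = frac_part (coords (take b xs))"
proof -
  define f where "f i = frac_part (coords (take i xs))" for i
  have "f ` {0..length xs} \<subseteq> Fracs"
    using assms(1) by (auto simp: f_def intro!: frac_part_coords_in_Fracs dest: in_set_takeD)
  then have "card (f ` {0..length xs}) \<le> card Fracs"
    by (rule card_mono[OF finite_Fracs])
  then have "card (f ` {0..length xs}) < card {0..length xs}"
    using assms(2) by simp
  then have "\<not> inj_on f {0..length xs}" by (rule pigeonhole)
  then obtain i j where "i \<in> {0..length xs}" "j \<in> {0..length xs}" "i \<noteq> j" "f i = f j"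
    unfolding inj_on_def by blast
  then show ?thesis
    using that[of i j] that[of j i] by (cases "i < j") (auto simp: f_def)
qed

lemma remove_integral_infix:
  assumes xs: "set xs \<subseteq> A" and long: "card Fracs \<le> length xs"
  obtains ys where "set ys \<subseteq> A" "length ys < length xs"
    "\<And>v. coords ys v \<le> coords xs v" "\<And>v. coords xs v - coords ys v \<in> \<int>"
proof -
  obtain a b where ab: "a < b" "b \<le> length xs"
    "frac_part (coords (take a xs)) = frac_part (coords (take b xs))"
    using equal_frac_prefixes[OF xs long] by blast
  define ys where "ys = take a xs @ drop b xs"
  define zs where "zs = drop a (take b xs)"
  have take_b: "take b xs = take a xs @ zs"
    using append_take_drop_id[of a "take b xs"] ab(1) by (simp add: zs_def min_def)
  have xs_split: "xs = take a xs @ zs @ drop b xs"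
    using append_take_drop_id[of b xs] by (simp add: take_b)
  have coords_xs: "coords xs v = coords ys v + coords zs v" for v
  proof -
    have "coords xs v = coords (take a xs @ zs @ drop b xs) v"
      using xs_split by (rule arg_cong[where f = "\<lambda>l. coords l v"])
    then show ?thesis by (simp add: ys_def coords_append)
  qed
  have "set ys \<subseteq> A" "set zs \<subseteq> A"
    using xs by (auto simp: ys_def zs_def dest: in_set_takeD in_set_dropD)
  have "coords zs v \<in> \<int>" for v
  proof -
    have "frac (coords (take b xs) v - coords (take a xs) v) = 0"
      using fun_cong[OF ab(3), of v] by (intro frac_diff_eq) (simp add: frac_part_def)
    then show ?thesis by (simp add: take_b coords_append frac_eq_0_iff)
  qed
  show ?thesis
  proof (rule that)
    show "set ys \<subseteq> A" by fact
    show "length ys < length xs" using ab by (simp add: ys_def)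
    show "coords ys v \<le> coords xs v" for v
      using coords_xs[of v] coords_nonneg[OF \<open>set zs \<subseteq> A\<close>, of v] by linarith
    show "coords xs v - coords ys v \<in> \<int>" for v
      using coords_xs[of v] \<open>coords zs v \<in> \<int>\<close> by simp
  qed
qed

lemma exists_short_word:
  assumes "set xs \<subseteq> A"
  shows "\<exists>ys. set ys \<subseteq> A \<and> length ys < card Fracs
           \<and> (\<forall>v. coords ys v \<le> coords xs v \<and> coords xs v - coords ys v \<in> \<int>)"
  using assms
proof (induction "length xs" arbitrary: xs rule: less_induct)
  case less
  show ?case
  proof (cases "length xs < card Fracs")
    case True
    then show ?thesis using less.prems by (intro exI[of _ xs]) auto
  next
    case False
    then obtain ys where ys: "set ys \<subseteq> A" "length ys < length xs"
      "\<And>v. coords ys v \<le> coords xs v" "\<And>v. coords xs v - coords ys v \<in> \<int>"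
      using remove_integral_infix[OF less.prems] by (metis not_less)
    then obtain ws where ws: "set ws \<subseteq> A" "length ws < card Fracs"
      "\<forall>v. coords ws v \<le> coords ys v \<and> coords ys v - coords ws v \<in> \<int>"
      using less.hyps[OF ys(2,1)] by blast
    have "coords ws v \<le> coords xs v \<and> coords xs v - coords ws v \<in> \<int>" for v
    proof
      show "coords ws v \<le> coords xs v" using ws(3) ys(3)[of v] by (meson order_trans)
      have "coords xs v - coords ws v = (coords xs v - coords ys v) + (coords ys v - coords ws v)"
        by simp
      then show "coords xs v - coords ws v \<in> \<int>"
        using ws(3) ys(4)[of v] by (metis Ints_add)
    qed
    then show ?thesis using ws(1,2) by blast
  qed
qed

lemma frac_part_eqI: "(\<And>v. \<mu> v - \<mu>' v \<in> \<int>) \<Longrightarrow> frac_part \<mu> = frac_part \<mu>'"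
  unfolding frac_part_def by (metis frac_add_int_right diff_add_cancel add.commute)

definition fibre :: "(real ^ 'n \<Rightarrow> real) \<Rightarrow> (real ^ 'n) multiset set" where
  "fibre g = {Y. set_mset Y \<subseteq> C \<and> (\<lambda>v. g v + real (count Y v)) \<in> bary_sums}"

definition floor_mset :: "(real ^ 'n \<Rightarrow> real) \<Rightarrow> (real ^ 'n) multiset" where
  "floor_mset \<mu> = (\<Sum>v\<in>C. replicate_mset (nat \<lfloor>\<mu> v\<rfloor>) v)"

lemma count_floor_mset: "count (floor_mset \<mu>) v = (if v \<in> C then nat \<lfloor>\<mu> v\<rfloor> else 0)"
  using finite_vertices by (simp add: floor_mset_def count_sum)

lemma set_floor_mset: "set_mset (floor_mset \<mu>) \<subseteq> C"
  by (metis count_floor_mset count_eq_zero_iff subsetI)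

lemma frac_part_add_floor_mset:
  assumes "\<mu> \<in> bary_sums"
  shows "\<mu> = (\<lambda>v. frac_part \<mu> v + real (count (floor_mset \<mu>) v))"
proof
  fix v
  obtain xs where "set xs \<subseteq> A" "\<mu> = coords xs" using assms by (auto simp: bary_sums_def)
  then show "\<mu> v = frac_part \<mu> v + real (count (floor_mset \<mu>) v)"
    using coords_nonneg coords_outside
    by (cases "v \<in> C") (auto simp: count_floor_mset frac_part_def frac_def)
qed

lemma floor_mset_in_fibre: "\<mu> \<in> bary_sums \<Longrightarrow> floor_mset \<mu> \<in> fibre (frac_part \<mu>)"
  using frac_part_add_floor_mset set_floor_mset by (auto simp: fibre_def)

lemma fibre_add:
  assumes Y: "Y \<in> fibre g" and Z: "set_mset Z \<subseteq> C"
  shows "Y + Z \<in> fibre g"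
proof -
  obtain xs where xs: "set xs \<subseteq> A" "(\<lambda>v. g v + real (count Y v)) = coords xs"
    using Y by (auto simp: fibre_def bary_sums_def)
  obtain zs where zs: "mset zs = Z" using ex_mset by blast
  have "set zs \<subseteq> C" using zs Z by auto
  then have "(\<lambda>v. g v + real (count (Y + Z) v)) = coords (xs @ zs)"
    using xs(2) zs by (auto simp: coords_append coords_vertices fun_eq_iff dest: fun_cong)
  moreover have "set (xs @ zs) \<subseteq> A" using xs(1) \<open>set zs \<subseteq> C\<close> vertices_subset by auto
  moreover have "set_mset (Y + Z) \<subseteq> C" using Y Z by (auto simp: fibre_def)
  ultimately show ?thesis unfolding fibre_def bary_sums_def by blast
qed

lemma fibre_zero:
  assumes "set_mset Y \<subseteq> C"
  shows "Y \<in> fibre (\<lambda>v. 0)"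
proof -
  have "{#} \<in> fibre (\<lambda>v. 0)"
    by (auto simp: fibre_def bary_sums_def intro!: exI[of _ "[]"])
  from fibre_add[OF this assms] show ?thesis by simp
qed

lemma fibre_generated:
  assumes g: "g \<in> Fracs" and Y: "Y \<in> fibre g"
  shows "\<exists>U\<in>fibre g. U \<subseteq># Y \<and> level g + size U < card Fracs"
proof -
  obtain xs where xs: "set xs \<subseteq> A" "(\<lambda>v. g v + real (count Y v)) = coords xs"
    using Y by (auto simp: fibre_def bary_sums_def)
  obtain ys where ys: "set ys \<subseteq> A" "length ys < card Fracs"
    "\<And>v. coords ys v \<le> coords xs v" "\<And>v. coords xs v - coords ys v \<in> \<int>"
    using exists_short_word[OF xs(1)] by blast
  have g_range: "0 \<le> g v \<and> g v < 1" for v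
    using g Fracs_subset_par_points by (auto simp: par_points_def)
  have "frac_part (coords ys) = frac_part (coords xs)"
    using ys(4) by (intro frac_part_eqI) (metis Ints_minus minus_diff_eq)
  also have "\<dots> = g"
    using g_range by (auto simp: frac_part_def fun_eq_iff frac_add_of_nat simp flip: xs(2))
  finally have frac_ys: "frac_part (coords ys) = g" .
  define U where "U = floor_mset (coords ys)"
  have "coords ys \<in> bary_sums" using ys(1) by (auto simp: bary_sums_def)
  then have U: "U \<in> fibre g" and coords_ys: "coords ys = (\<lambda>v. g v + real (count U v))"
    using floor_mset_in_fibre[of "coords ys"] frac_part_add_floor_mset[of "coords ys"]
    by (simp_all add: U_def frac_ys)
  have "U \<subseteq># Y"
  proof (rule mset_subset_eqI)
    fix v
    have "real (count U v) = coords ys v - g v" by (simp add: coords_ys)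
    also have "\<dots> \<le> coords xs v - g v" using ys(3) by simp
    also have "\<dots> = real (count Y v)" by (simp flip: xs(2))
    finally show "count U v \<le> count Y v" by simp
  qed
  moreover have "real (level g) + real (size U) = real (length ys)"
    using level_par_points g Fracs_subset_par_points sum_coords[OF ys(1)]
      sum_count_eq_size[of U] U
    by (auto simp: coords_ys sum.distrib fibre_def)
  ultimately show ?thesis using U ys(2) by (intro bexI[of _ U]) auto
qed

lemma fibre_iff_generated:
  assumes g: "g \<in> Fracs" and Y: "set_mset Y \<subseteq> C"
  shows "Y \<in> fibre g \<longleftrightarrow> (\<exists>U\<in>{U \<in> fibre g. level g + size U < card Fracs}. U \<subseteq># Y)"
proof
  assume "Y \<in> fibre g"
  from fibre_generated[OF g this]
  show "\<exists>U\<in>{U \<in> fibre g. level g + size U < card Fracs}. U \<subseteq># Y" by auto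
next
  assume "\<exists>U\<in>{U \<in> fibre g. level g + size U < card Fracs}. U \<subseteq># Y"
  then obtain U where "U \<in> fibre g" "U \<subseteq># Y" by blast
  have "set_mset (Y - U) \<subseteq> C" using Y by (auto dest: in_diffD)
  with \<open>U \<in> fibre g\<close> have "U + (Y - U) \<in> fibre g" by (rule fibre_add)
  with \<open>U \<subseteq># Y\<close> show "Y \<in> fibre g" by (simp add: subset_mset.add_diff_inverse)
qed

lemma level_less_card_Fracs:
  assumes "g \<in> Fracs"
  shows "level g < card Fracs"
proof -
  obtain \<mu> where \<mu>: "\<mu> \<in> bary_sums" "g = frac_part \<mu>" using assms by (auto simp: Fracs_def)
  have "floor_mset \<mu> \<in> fibre g" using floor_mset_in_fibre[OF \<mu>(1)] \<mu>(2) by simp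
  from fibre_generated[OF assms this] show ?thesis by (auto dest: add_lessD1)
qed

lemma level_pos:
  assumes g: "g \<in> Fracs" and "g \<noteq> (\<lambda>v. 0)"
  shows "1 \<le> level g"
proof -
  have g_par: "g \<in> par_points" using g Fracs_subset_par_points by blast
  obtain w where w: "g w \<noteq> 0" using assms(2) by auto
  then have "w \<in> C" "0 < g w" using g_par by (auto simp: par_points_def order.order_iff_strict)
  moreover have "g w \<le> sum g C"
    using finite_vertices g_par \<open>w \<in> C\<close> by (intro member_le_sum) (auto simp: par_points_def)
  ultimately show ?thesis using level_par_points[OF g_par] by simp
qed

lemma card_layer_frac_part:
  assumes g: "g \<in> Fracs"
  shows "card {\<mu> \<in> layer h. frac_part \<mu> = g}
       = card {Y. set_mset Y \<subseteq> C \<and> int (size Y) = h - int (level g) \<and> Y \<in> fibre g}"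
proof -
  define \<psi> where "\<psi> Y = (\<lambda>v. g v + real (count Y v))" for Y :: "(real ^ 'n) multiset"
  have g_par: "g \<in> par_points" using g Fracs_subset_par_points by blast
  have inj: "inj_on \<psi> {Y. set_mset Y \<subseteq> C \<and> int (size Y) = h - int (level g) \<and> Y \<in> fibre g}"
    by (intro inj_onI) (auto simp: \<psi>_def fun_eq_iff intro: multiset_eqI)
  moreover have img: "\<psi> ` {Y. set_mset Y \<subseteq> C \<and> int (size Y) = h - int (level g) \<and> Y \<in> fibre g}
      = {\<mu> \<in> layer h. frac_part \<mu> = g}"
  proof (intro equalityI subsetI)
    fix \<mu> assume "\<mu> \<in> \<psi> ` {Y. set_mset Y \<subseteq> C \<and> int (size Y) = h - int (level g) \<and> Y \<in> fibre g}"
    then obtain Y where Y: "\<mu> = \<psi> Y" "set_mset Y \<subseteq> C" "int (size Y) = h - int (level g)" "Y \<in> fibre g"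
      by blast
    have "sum \<mu> C = real (level g) + real (size Y)"
      using level_par_points[OF g_par] by (simp add: Y(1) \<psi>_def sum.distrib sum_count_eq_size[OF Y(2)])
    then have "sum \<mu> C = of_int h" using Y(3) by linarith
    moreover have "frac_part \<mu> = g"
      using g_par by (auto simp: Y(1) \<psi>_def frac_part_def par_points_def frac_add_of_nat)
    ultimately show "\<mu> \<in> {\<mu> \<in> layer h. frac_part \<mu> = g}"
      using Y(1,4) by (simp add: layer_def fibre_def \<psi>_def)
  next
    fix \<mu> assume \<mu>: "\<mu> \<in> {\<mu> \<in> layer h. frac_part \<mu> = g}"
    then have "\<mu> \<in> bary_sums" "frac_part \<mu> = g" by (auto simp: layer_def)
    then have \<mu>_eq: "\<mu> = \<psi> (floor_mset \<mu>)" and "floor_mset \<mu> \<in> fibre g"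
      using frac_part_add_floor_mset floor_mset_in_fibre by (auto simp: \<psi>_def)
    have "real (level g) + real (size (floor_mset \<mu>)) = sum \<mu> C"
      by (subst (2) \<mu>_eq) (simp add: \<psi>_def sum.distrib sum_count_eq_size set_floor_mset
          level_par_points[OF g_par])
    then have "int (size (floor_mset \<mu>)) = h - int (level g)"
      using \<mu> by (simp add: layer_def)
    then show "\<mu> \<in> \<psi> ` {Y. set_mset Y \<subseteq> C \<and> int (size Y) = h - int (level g) \<and> Y \<in> fibre g}"
      using \<open>floor_mset \<mu> \<in> fibre g\<close> set_floor_mset by (intro image_eqI[where f = \<psi>, OF \<mu>_eq]) simp
  qed
  ultimately show ?thesis using card_image[OF inj] by simp
qed

lemma fibre_generators:
  assumes g: "g \<in> Fracs"
  obtains Gen c where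
    "\<And>Y. set_mset Y \<subseteq> C \<Longrightarrow> Y \<in> fibre g \<longleftrightarrow> (\<exists>U\<in>Gen. U \<subseteq># Y)"
    "\<And>U. U \<in> Gen \<Longrightarrow> set_mset U \<subseteq> C \<and> (\<forall>v. count U v \<le> c)"
    "int (level g) + int (card C) * (int c - 1) + 1
       \<le> max 0 (int (card C) * int (card Fracs) - 3 * int (card C) + 2)"
proof (cases "g = (\<lambda>v. 0)")
  case True
  \<comment> \<open>every multiset lies in the fibre, so \<open>{#}\<close> alone generates it: a better threshold\<close>
  then have "level g = 0" by (simp add: level_def)
  show ?thesis
  proof (rule that[of "{{#}}" 0])
    show "Y \<in> fibre g \<longleftrightarrow> (\<exists>U\<in>{{#}}. U \<subseteq># Y)" if "set_mset Y \<subseteq> C" for Y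
      using fibre_zero[OF that] True by simp
  qed (use \<open>level g = 0\<close> card_vertices in auto)
next
  case False
  have "1 \<le> level g" "level g < card Fracs"
    using level_pos[OF g False] level_less_card_Fracs[OF g] .
  define c where "c = card Fracs - 1 - level g"
  show ?thesis
  proof (rule that[of "{U \<in> fibre g. level g + size U < card Fracs}" c])
    show "Y \<in> fibre g \<longleftrightarrow> (\<exists>U\<in>{U \<in> fibre g. level g + size U < card Fracs}. U \<subseteq># Y)"
      if "set_mset Y \<subseteq> C" for Y
      using fibre_iff_generated[OF g that] .
  next
    fix U assume "U \<in> {U \<in> fibre g. level g + size U < card Fracs}"
    then show "set_mset U \<subseteq> C \<and> (\<forall>v. count U v \<le> c)"
      using count_le_size[of U] by (auto simp: fibre_def c_def intro: le_trans[of _ "size U"])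
  next
    define k where "k = card C"
    have "0 \<le> (int k - 1) * (int (level g) - 1)"
      using \<open>1 \<le> level g\<close> card_vertices by (simp add: k_def)
    moreover have "int (card Fracs) = int c + int (level g) + 1"
      using \<open>level g < card Fracs\<close> by (simp add: c_def)
    ultimately have "int (level g) + int k * (int c - 1) + 1 \<le> int k * int (card Fracs) - 3 * int k + 2"
      by (simp add: algebra_simps)
    then show "int (level g) + int (card C) * (int c - 1) + 1
        \<le> max 0 (int (card C) * int (card Fracs) - 3 * int (card C) + 2)"
      by (simp add: k_def)
  qed
qed

lemma polynomial_from_card_layer_frac_part:
  assumes g: "g \<in> Fracs"
  shows "polynomial_from (max 0 (int (card C) * int (card Fracs) - 3 * int (card C) + 2))
           (\<lambda>h. of_nat (card {\<mu> \<in> layer h. frac_part \<mu> = g}) :: 'a::field_char_0)"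
proof -
  obtain Gen c where gen: "\<And>Y. set_mset Y \<subseteq> C \<Longrightarrow> Y \<in> fibre g \<longleftrightarrow> (\<exists>U\<in>Gen. U \<subseteq># Y)"
    and bounded: "\<And>U. U \<in> Gen \<Longrightarrow> set_mset U \<subseteq> C \<and> (\<forall>v. count U v \<le> c)"
    and threshold: "int (level g) + int (card C) * (int c - 1) + 1
       \<le> max 0 (int (card C) * int (card Fracs) - 3 * int (card C) + 2)"
    using fibre_generators[OF g] by blast
  have "polynomial_from (int (card C) * (int c - 1) + 1 + int (level g))
      (\<lambda>h. of_nat (card {Y. set_mset Y \<subseteq> C \<and> int (size Y) = h - int (level g) \<and> (\<exists>U\<in>Gen. U \<subseteq># Y)}) :: 'a)"
    by (rule polynomial_from_shift[OF polynomial_from_card_msets_containing[OF finite_vertices bounded]])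
  moreover have "card {\<mu> \<in> layer h. frac_part \<mu> = g}
      = card {Y. set_mset Y \<subseteq> C \<and> int (size Y) = h - int (level g) \<and> (\<exists>U\<in>Gen. U \<subseteq># Y)}" for h
    unfolding card_layer_frac_part[OF g] by (intro arg_cong[where f = card]) (use gen in blast)
  ultimately have "polynomial_from (int (card C) * (int c - 1) + 1 + int (level g))
      (\<lambda>h. of_nat (card {\<mu> \<in> layer h. frac_part \<mu> = g}) :: 'a)"
    by simp
  then show ?thesis
    by (rule polynomial_from_mono) (use threshold in linarith)
qed

lemma polynomial_from_card_layer:
  "polynomial_from (max 0 (int (card C) * int (card Fracs) - 3 * int (card C) + 2))
     (\<lambda>h. of_nat (card (layer h)) :: 'a::field_char_0)"
proof -
  have "card (layer h) = (\<Sum>g\<in>Fracs. card {\<mu> \<in> layer h. frac_part \<mu> = g})" for h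
  proof -
    have "card (layer h) = card (\<Union>g\<in>Fracs. {\<mu> \<in> layer h. frac_part \<mu> = g})"
      by (rule arg_cong[where f = card]) (auto simp: layer_def Fracs_def)
    also have "\<dots> = (\<Sum>g\<in>Fracs. card {\<mu> \<in> layer h. frac_part \<mu> = g})"
      using finite_Fracs finite_layer[of h] by (intro card_UN_disjoint) auto
    finally show ?thesis .
  qed
  then show ?thesis
    by (simp only: of_nat_sum) (rule polynomial_from_sum[OF polynomial_from_card_layer_frac_part])
qed

lemma card_sumset_polynomial:
  "\<exists>p :: 'a::field_char_0 poly. \<forall>h :: nat.
     real h \<ge> measure lebesgue (convex hull C) * fact (CARD('n) + 1) - 1 - 3 * real CARD('n)
     \<longrightarrow> of_nat (card (sumset h A)) = poly p (of_nat h)"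
proof -
  obtain p :: "'a poly" where p: "\<And>h. h \<ge> max 0 (int (card C) * int (card Fracs) - 3 * int (card C) + 2)
      \<Longrightarrow> of_nat (card (layer h)) = poly p (of_int h)"
    using polynomial_from_card_layer unfolding polynomial_from_def by blast
  have "int h \<ge> max 0 (int (card C) * int (card Fracs) - 3 * int (card C) + 2)"
    if "real h \<ge> measure lebesgue (convex hull C) * fact (CARD('n) + 1) - 1 - 3 * real CARD('n)"
    for h :: nat
  proof -
    have "real (card C) * real (card Fracs) \<le> measure lebesgue (convex hull C) * fact (CARD('n) + 1)"
      using mult_left_mono[OF card_Fracs_le, of "real (card C)"] card_vertices
      by (simp add: algebra_simps)
    moreover have "real (card C) = real CARD('n) + 1" using card_vertices by simp
    ultimately have "real (card C) * real (card Fracs) - 3 * real (card C) + 2 \<le> real h"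
      using that by linarith
    then have "real_of_int (int (card C) * int (card Fracs) - 3 * int (card C) + 2) \<le> real_of_int (int h)"
      by simp
    then show ?thesis by (simp only: of_int_le_iff max.bounded_iff) simp
  qed
  then show ?thesis
    using p by (metis card_sumset_eq_card_layer of_int_of_nat_eq)
qed

end

theorem theorem1p4:
  fixes A :: "(real ^ 'n) set"
  assumes "finite A"
    and "A \<subseteq> int_points"
    and "add_subgroup_gen (diffset A) = int_points"
    and "int CARD('n) simplex (convex hull A)"
  shows "\<exists>p :: rat poly. \<forall>h :: nat.
           real h \<ge> measure lebesgue (convex hull A) * fact (CARD('n) + 1) - 1 - 3 * real CARD('n)
           \<longrightarrow> rat_of_nat (card (sumset h A)) = poly p (rat_of_nat h)"
proof -
  obtain C where C: "\<not> affine_dependent C" "card C = Suc CARD('n)" "convex hull A = convex hull C"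
    using assms(4) unfolding simplex_def by auto
  have "C \<subseteq> A" using convex_hull_eq_simplex_imp_vertices_subset[OF C(1,3)] .
  interpret lattice_simplex_set C A
    using assms(1,2) C \<open>C \<subseteq> A\<close> by unfold_locales (auto intro: hull_subset[THEN subsetD])
  show ?thesis
    using card_sumset_polynomial[where 'a = rat] C(3) by simp
qed

end
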